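(* Let $\mathcal{H}$ be a real Hilbert space and let $f,g\in\Gamma_0(\mathcal{H})$. Suppose that for some $x_0\in\operatorname{dom} f\cap\operatorname{dom} g$, $$\Vert \operatorname{prox}_f(x)-x_0\Vert = \Vert \operatorname{prox}_g(x)-x_0\Vert \quad\text{for all } x\in\mathcal{H}.$$ Then $f-f(x_0)=g-g(x_0)$ on $\mathcal{H}$.
   Context: $\Gamma_0(\mathcal{H})$ denotes the set of proper, convex, lower semicontinuous functions $\mathcal{H}\to\mathbb{R}\cup\{+\infty\}$. For $f\in\Gamma_0(\mathcal{H})$, $\operatorname{prox}_f(x)=\operatorname{argmin}_{y\in\mathcal{H}}\{f(y)+\tfrac12\Vert x-y\Vert^2\}$. $\operatorname{dom} f=\{x: f(x)<+\infty\}$. *)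

theory Defs
  imports "HOL-Analysis.Analysis" "HOL-Library.Extended_Real"
begin

text \<open>Functions H -> R \<union> {+\<infinity>} are modelled as ereal-valued functions never taking -\<infinity>.\<close>

definition proper_fun :: "('a \<Rightarrow> ereal) \<Rightarrow> bool" where
  "proper_fun f \<longleftrightarrow> (\<forall>x. f x \<noteq> -\<infinity>) \<and> (\<exists>x. f x \<noteq> \<infinity>)"

definition convex_fun :: "('a::real_vector \<Rightarrow> ereal) \<Rightarrow> bool" where
  "convex_fun f \<longleftrightarrow> (\<forall>x y (t::real). 0 \<le> t \<and> t \<le> 1 \<longrightarrow>
      f ((1 - t) *\<^sub>R x + t *\<^sub>R y) \<le> ereal (1 - t) * f x + ereal t * f y)"

definition lsc_fun :: "('a::topological_space \<Rightarrow> ereal) \<Rightarrow> bool" where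
  "lsc_fun f \<longleftrightarrow> (\<forall>c. closed {x. f x \<le> c})"

definition Gamma0 :: "('a::real_inner \<Rightarrow> ereal) set" where
  "Gamma0 = {f. proper_fun f \<and> convex_fun f \<and> lsc_fun f}"

definition edom :: "('a \<Rightarrow> ereal) \<Rightarrow> 'a set" where
  "edom f = {x. f x < \<infinity>}"

definition prox :: "('a::real_inner \<Rightarrow> ereal) \<Rightarrow> 'a \<Rightarrow> 'a" where
  "prox f x = (THE p. \<forall>y. f p + ereal ((norm (x - p))\<^sup>2 / 2) \<le> f y + ereal ((norm (x - y))\<^sup>2 / 2))"

end

theory Submission
  imports Defs
begin

text \<open>For \<open>f \<in> \<Gamma>\<^sub>0\<close> the function \<open>h\<^sub>f x = \<parallel>x - x0\<parallel>\<^sup>2/2 - e\<^sub>f x\<close>, with \<open>e\<^sub>f\<close> the Moreau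
  envelope, is convex with gradient \<open>prox f - x0\<close>, and this gradient is firmly nonexpansive.
  The hypothesis says that \<open>h\<^sub>f\<close> and \<open>h\<^sub>g\<close> have gradients of equal norm. Along gradient descent
  on \<open>h\<^sub>f\<close> with step \<open>\<tau>\<close>, the quantity \<open>(1 + 2\<tau>) h\<^sub>f - h\<^sub>g\<close> does not increase, while the
  gradients become small fast enough that \<open>h\<^sub>g\<close> approaches its infimum. Letting \<open>\<tau> \<rightarrow> 0\<close> gives
  \<open>h\<^sub>g - inf h\<^sub>g \<le> h\<^sub>f - inf h\<^sub>f\<close>, so by symmetry \<open>h\<^sub>f - h\<^sub>g\<close> is a constant \<open>\<kappa>\<close>. Then the gradients
  coincide, \<open>prox f = prox g\<close>, and \<open>g = f + \<kappa>\<close> on the range of \<open>prox f\<close>. Every point of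
  \<open>dom f\<close> is a limit of points \<open>prox f x\<close> at which \<open>f\<close> is no larger, so lower
  semicontinuity of \<open>g\<close> gives \<open>g \<le> f + \<kappa>\<close> on \<open>dom f\<close>; with the symmetric inequality,
  \<open>g = f + \<kappa>\<close> everywhere.\<close>

lemma Gamma0D:
  assumes "f \<in> Gamma0"
  shows "\<And>x. f x \<noteq> -\<infinity>" and "\<exists>x. f x \<noteq> \<infinity>" and "convex_fun f" and "lsc_fun f"
  using assms by (auto simp: Gamma0_def proper_fun_def)

lemma Gamma0_ereal_real: "f \<in> Gamma0 \<Longrightarrow> f x \<noteq> \<infinity> \<Longrightarrow> f x = ereal (real_of_ereal (f x))"
  using Gamma0D(1)[of f x] by (cases "f x") auto

lemma convex_funD_ereal:
  assumes "convex_fun f" "f x = ereal a" "f y = ereal b" "0 \<le> t" "t \<le> 1"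
  shows "f ((1 - t) *\<^sub>R x + t *\<^sub>R y) \<le> ereal ((1 - t) * a + t * b)"
proof -
  have "f ((1 - t) *\<^sub>R x + t *\<^sub>R y) \<le> ereal (1 - t) * f x + ereal t * f y"
    using assms(1,4,5) by (auto simp: convex_fun_def)
  with assms(2,3) show ?thesis by simp
qed

lemma lsc_fun_le_limit:
  assumes "lsc_fun f" "z \<longlonglongrightarrow> l" "\<forall>\<^sub>F n in sequentially. f (z n) \<le> c"
  shows "f l \<le> c"
proof -
  have "closed {x. f x \<le> c}" using assms(1) by (simp add: lsc_fun_def)
  from Lim_in_closed_set[OF this _ trivial_limit_sequentially assms(2)] assms(3)
  show ?thesis by simp
qed

lemma lsc_fun_gt_near:
  fixes f :: "'a::metric_space \<Rightarrow> ereal"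
  assumes "lsc_fun f" "c < f y"
  obtains d where "0 < d" "\<And>q. dist q y < d \<Longrightarrow> c < f q"
proof -
  have "open (- {x. f x \<le> c})" using assms(1) by (auto simp: lsc_fun_def)
  with assms(2) show ?thesis
    using that unfolding open_dist by (force simp: not_le)
qed

lemma lsc_fun_add_continuous_limit_le:
  fixes f :: "'a::metric_space \<Rightarrow> ereal"
  assumes lsc: "lsc_fun f" and g: "isCont g p" and z: "z \<longlonglongrightarrow> p" and b: "b \<longlonglongrightarrow> m"
    and le: "\<And>n. f (z n) + ereal (g (z n)) \<le> ereal (b n)"
  shows "f p + ereal (g p) \<le> ereal m"
proof (rule ereal_le_epsilon2)
  fix e :: real assume e: "0 < e"
  have "\<forall>\<^sub>F n in sequentially. dist (g (z n)) (g p) < e/2"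
    using tendstoD[OF isCont_tendsto_compose[OF g z], of "e/2"] e by simp
  moreover have "\<forall>\<^sub>F n in sequentially. dist (b n) m < e/2"
    using tendstoD[OF b, of "e/2"] e by simp
  ultimately have "\<forall>\<^sub>F n in sequentially. g p - e/2 < g (z n) \<and> b n < m + e/2"
    by eventually_elim (simp only: dist_real_def abs_less_iff, linarith)
  then have "\<forall>\<^sub>F n in sequentially. f (z n) \<le> ereal (m - g p + e)"
  proof (rule eventually_mono)
    fix n assume "g p - e/2 < g (z n) \<and> b n < m + e/2"
    with le[of n] show "f (z n) \<le> ereal (m - g p + e)"
      by (cases "f (z n)") auto
  qed
  then have "f p \<le> ereal (m - g p + e)" by (rule lsc_fun_le_limit[OF lsc z])
  then show "f p + ereal (g p) \<le> ereal m + ereal e"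
    by (cases "f p") auto
qed

lemma lsc_fun_limit_MInfty:
  assumes "lsc_fun f" "w \<longlonglongrightarrow> l" "\<And>n. f (w n) \<le> ereal (- real n)"
  shows "f l = -\<infinity>"
proof -
  have bound: "f l \<le> ereal (- real N)" for N
  proof (rule lsc_fun_le_limit[OF assms(1,2)])
    show "\<forall>\<^sub>F n in sequentially. f (w n) \<le> ereal (- real N)"
      unfolding eventually_sequentially
      using assms(3) by (metis (no_types) ereal_less_eq(3) neg_le_iff_le of_nat_le_iff order_trans)
  qed
  show ?thesis
  proof (cases "f l")
    case (real r)
    obtain N :: nat where "- r < N" using reals_Archimedean2 by blast
    with bound[of N] real show ?thesis by simp
  qed (use bound[of 0] in auto)
qed

lemma Cauchy_if_dist_Suc_le_half_power:
  fixes w :: "nat \<Rightarrow> 'a::metric_space"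
  assumes step: "\<And>n. dist (w n) (w (Suc n)) \<le> C * (1/2)^n"
  shows "Cauchy w"
proof -
  have tail: "dist (w m) (w n) \<le> 2 * C * (1/2)^m - 2 * C * (1/2)^n" if "m \<le> n" for m n
    using that
  proof (induction n rule: dec_induct)
    case (step n)
    have "dist (w m) (w (Suc n)) \<le> dist (w m) (w n) + dist (w n) (w (Suc n))"
      by (rule dist_triangle)
    with step.IH assms[of n] show ?case by simp
  qed simp
  have "0 \<le> C" using order_trans[OF zero_le_dist step[of 0]] by simp
  show ?thesis
    unfolding Cauchy_altdef2
  proof (intro allI impI)
    fix e :: real assume "0 < e"
    then obtain N where N: "(1/2::real)^N < e / (2 * C + 1)"
      using real_arch_pow_inv[of "e / (2 * C + 1)" "1/2"] \<open>0 \<le> C\<close> by auto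
    have "2 * C * (1/2::real)^N < e"
    proof -
      have "2 * C * (1/2::real)^N \<le> (2 * C + 1) * (1/2)^N" by simp
      also have "\<dots> < e" using N \<open>0 \<le> C\<close> by (simp add: field_simps)
      finally show ?thesis .
    qed
    moreover have "dist (w n) (w N) \<le> 2 * C * (1/2)^N" if "N \<le> n" for n
    proof -
      have "0 \<le> 2 * C * (1/2::real)^n" using \<open>0 \<le> C\<close> by simp
      with tail[OF that] show ?thesis by (simp add: dist_commute)
    qed
    ultimately show "\<exists>N. \<forall>n\<ge>N. dist (w n) (w N) < e"
      by (meson le_less_trans)
  qed
qed

lemma Cauchy_if_norm_diff_sq_le:
  fixes z :: "nat \<Rightarrow> 'a::real_normed_vector"
  assumes le: "\<And>i j. (norm (z i - z j))\<^sup>2 \<le> e i + e j" and e: "e \<longlonglongrightarrow> 0"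
  shows "Cauchy z"
proof (rule CauchyI)
  fix r :: real assume "0 < r"
  then obtain M where M: "\<And>n. M \<le> n \<Longrightarrow> \<bar>e n\<bar> < r\<^sup>2 / 2"
    using e unfolding LIMSEQ_iff by (metis diff_zero half_gt_zero real_norm_def zero_less_power)
  have "norm (z i - z j) < r" if "M \<le> i" "M \<le> j" for i j
  proof -
    have "(norm (z i - z j))\<^sup>2 < r\<^sup>2" using le[of i j] M[OF that(1)] M[OF that(2)] by linarith
    then show ?thesis using \<open>0 < r\<close> by (simp add: power_less_imp_less_base)
  qed
  then show "\<exists>M. \<forall>m\<ge>M. \<forall>n\<ge>M. norm (z m - z n) < r" by blast
qed

section \<open>Lower bounds for convex lower semicontinuous functions\<close>

lemma convex_fun_step_below:
  assumes "convex_fun f" "f v = ereal r" "f z \<noteq> -\<infinity>" "f z < ereal (- (K + \<bar>r\<bar>) / t)"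
    and "0 \<le> K" "0 < t" "t \<le> 1"
  shows "f ((1 - t) *\<^sub>R v + t *\<^sub>R z) \<le> ereal (- K)"
proof -
  obtain s where s: "f z = ereal s" using assms(3,4) by (cases "f z") auto
  have "f ((1 - t) *\<^sub>R v + t *\<^sub>R z) \<le> ereal ((1 - t) * r + t * s)"
    using convex_funD_ereal[OF assms(1,2) s] assms(6,7) by simp
  also have "(1 - t) * r + t * s \<le> (1 - t) * r - (K + \<bar>r\<bar>)"
    using assms(4,6) s by (simp add: field_simps)
  also have "\<dots> \<le> - K"
    using assms(6,7) mult_left_le_one_le[of "\<bar>r\<bar>" "1 - t"] mult_left_mono[of r "\<bar>r\<bar>" "1 - t"]
    by (simp add: abs_ge_self)
  finally show ?thesis by simp
qed

text \<open>Moving a fraction \<open>2\<^sup>-\<^sup>n\<^sup>-\<^sup>1\<close> of the way towards points of ever more negative value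
  keeps the iterates in the ball and drives \<open>f\<close> to \<open>-\<infinity>\<close> along a Cauchy sequence.\<close>

lemma convex_fun_unbounded_below_cball:
  fixes f :: "'a::real_normed_vector \<Rightarrow> ereal"
  assumes convex: "convex_fun f" and proper: "\<And>x. f x \<noteq> -\<infinity>" and a: "f a \<noteq> \<infinity>"
    and unbounded: "\<And>M. \<exists>z\<in>cball a 1. f z < ereal M"
  obtains w where "\<And>n. dist (w n) (w (Suc n)) \<le> 1 * (1/2)^n" "\<And>n. f (w (Suc n)) \<le> ereal (- real n)"
proof -
  obtain pick where pick: "\<And>M. pick M \<in> cball a 1" "\<And>M. f (pick M) < ereal M"
    using unbounded by metis
  define t :: "nat \<Rightarrow> real" where "t n = (1/2)^Suc n" for n
  have t: "0 < t n" "t n \<le> 1" for n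
    unfolding t_def by (simp, intro power_le_one) simp_all
  define w where "w = rec_nat a (\<lambda>n v. (1 - t n) *\<^sub>R v
    + t n *\<^sub>R pick (- (real n + 1 + \<bar>real_of_ereal (f v)\<bar>) / t n))"
  define z where "z n = pick (- (real n + 1 + \<bar>real_of_ereal (f (w n))\<bar>) / t n)" for n
  have w_Suc: "w (Suc n) = (1 - t n) *\<^sub>R w n + t n *\<^sub>R z n" for n
    by (simp add: w_def z_def)
  have w_below: "f (w (Suc n)) \<le> ereal (- (real n + 1))" if "f (w n) \<noteq> \<infinity>" for n
  proof -
    have "f (w n) = ereal (real_of_ereal (f (w n)))"
      using that proper[of "w n"] by (cases "f (w n)") auto
    then show ?thesis
      unfolding w_Suc z_def
        by (rule convex_fun_step_below[OF convex _ proper pick(2)]) (use t in auto)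
  qed
  have w_finite: "f (w n) \<noteq> \<infinity>" for n
  proof (induction n)
    case (Suc n)
    then show ?case using w_below[of n] by auto
  qed (simp add: w_def a)
  have w_cball: "w n \<in> cball a 1" for n
  proof (induction n)
    case (Suc n)
    show ?case
      unfolding w_Suc z_def by (rule convexD[OF convex_cball Suc pick(1)]) (use t[of n] in auto)
  qed (simp add: w_def)
  have "dist (w n) (w (Suc n)) \<le> 1 * (1/2)^n" for n
  proof -
    have "z n \<in> cball a 1" unfolding z_def by (rule pick(1))
    then have "dist (w n) (z n) \<le> 2"
      using dist_triangle3[of "w n" "z n" a] w_cball[of n] by (simp only: mem_cball)
    moreover have "w n - w (Suc n) = t n *\<^sub>R (w n - z n)"
      by (simp add: w_Suc algebra_simps)
    then have "dist (w n) (w (Suc n)) = t n * dist (w n) (z n)"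
      using t[of n] by (simp add: dist_norm)
    ultimately have "dist (w n) (w (Suc n)) \<le> t n * 2"
      using t[of n] by (simp add: mult_left_mono)
    then show ?thesis by (simp add: t_def)
  qed
  moreover have "f (w (Suc n)) \<le> ereal (- real n)" for n
    using w_below[OF w_finite, of n] by (simp add: order_trans)
  ultimately show ?thesis using that by blast
qed

lemma convex_lsc_bdd_below_cball:
  fixes f :: "'a::{real_normed_vector,complete_space} \<Rightarrow> ereal"
  assumes convex: "convex_fun f" and lsc: "lsc_fun f" and proper: "\<And>x. f x \<noteq> -\<infinity>"
    and a: "f a \<noteq> \<infinity>"
  obtains m where "\<And>z. z \<in> cball a 1 \<Longrightarrow> ereal m \<le> f z"
proof -
  have "\<exists>m. \<forall>z\<in>cball a 1. ereal m \<le> f z"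
  proof (rule ccontr)
    assume "\<nexists>m. \<forall>z\<in>cball a 1. ereal m \<le> f z"
    then have "\<exists>z\<in>cball a 1. f z < ereal M" for M by (meson not_le)
    then obtain w where step: "\<And>n. dist (w n) (w (Suc n)) \<le> 1 * (1/2)^n"
      and below: "\<And>n. f (w (Suc n)) \<le> ereal (- real n)"
      using convex_fun_unbounded_below_cball[OF convex proper a] by blast
    have "Cauchy w" using step by (rule Cauchy_if_dist_Suc_le_half_power)
    then obtain l where "w \<longlonglongrightarrow> l" using Cauchy_convergent convergent_def by blast
    then have "(\<lambda>n. w (Suc n)) \<longlonglongrightarrow> l" by (rule LIMSEQ_Suc)
    then have "f l = -\<infinity>" using below by (rule lsc_fun_limit_MInfty[OF lsc])
    with proper show False by blast
  qed
  with that show ?thesis by blast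
qed

lemma convex_lsc_lower_bound_norm:
  fixes f :: "'a::{real_normed_vector,complete_space} \<Rightarrow> ereal"
  assumes convex: "convex_fun f" and lsc: "lsc_fun f" and proper: "\<And>x. f x \<noteq> -\<infinity>"
    and a: "f a = ereal r"
  obtains A B where "0 \<le> B" "\<And>z. ereal (- A - B * norm (z - a)) \<le> f z"
proof -
  have "f a \<noteq> \<infinity>" using a by simp
  then obtain m where m: "\<And>z. z \<in> cball a 1 \<Longrightarrow> ereal m \<le> f z"
    using convex_lsc_bdd_below_cball[OF convex lsc proper] by blast
  define B where "B = \<bar>m\<bar> + \<bar>r\<bar>"
  have "ereal (- B - B * norm (z - a)) \<le> f z" for z
  proof (cases "f z")
    case (real s)
    define \<rho> where "\<rho> = norm (z - a)"
    show ?thesis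
    proof (cases "\<rho> \<le> 1")
      case True
      then have "m \<le> s" using m[of z] real by (simp add: \<rho>_def dist_norm norm_minus_commute)
      moreover have "0 \<le> B * \<rho>" by (simp add: B_def \<rho>_def)
      ultimately show ?thesis using real by (simp add: B_def flip: \<rho>_def)
    next
      case False
      define u where "u = (1 - 1/\<rho>) *\<^sub>R a + (1/\<rho>) *\<^sub>R z"
      have "u - a = (1/\<rho>) *\<^sub>R (z - a)" by (simp add: u_def algebra_simps)
      then have "norm (u - a) = 1" using False by (auto simp: \<rho>_def)
      then have "u \<in> cball a 1" by (simp add: dist_norm norm_minus_commute)
      then have "ereal m \<le> ereal ((1 - 1/\<rho>) * r + (1/\<rho>) * s)"
        using m order_trans convex_funD_ereal[OF convex a real, of "1/\<rho>"] False
        unfolding u_def by fastforce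
      then have "\<rho> * m \<le> (\<rho> - 1) * r + s" using False by (simp add: field_simps)
      moreover have "- (\<bar>m\<bar> * \<rho>) \<le> \<rho> * m"
        using False mult_left_mono[of "- \<bar>m\<bar>" m \<rho>] by (simp add: mult.commute)
      moreover have "(\<rho> - 1) * r \<le> (\<rho> - 1) * \<bar>r\<bar>"
        using False by (intro mult_left_mono) auto
      moreover have "(\<rho> - 1) * \<bar>r\<bar> \<le> \<bar>r\<bar> * \<rho>"
        by (simp add: algebra_simps)
      ultimately have "- B - B * \<rho> \<le> s"
        unfolding B_def distrib_right by linarith
      then show ?thesis using real by (simp add: \<rho>_def)
    qed
  qed (use proper in auto)
  moreover have "0 \<le> B" by (simp add: B_def)
  ultimately show ?thesis using that by blast
qed

section \<open>Proximal points\<close>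

lemma norm_diff_midpoint_sq:
  fixes y z1 z2 :: "'a::real_inner"
  shows "(norm (y - ((1/2) *\<^sub>R z1 + (1/2) *\<^sub>R z2)))\<^sup>2
    = (norm (y - z1))\<^sup>2 / 2 + (norm (y - z2))\<^sup>2 / 2 - (norm (z1 - z2))\<^sup>2 / 4"
  by (simp add: power2_norm_eq_inner inner_diff_left inner_diff_right inner_add_left
      inner_add_right inner_commute field_simps)

lemma Gamma0_quadratic_bdd_below:
  fixes f :: "'a::{real_inner,complete_space} \<Rightarrow> ereal"
  assumes f: "f \<in> Gamma0" and c: "0 < c"
  obtains L where "\<And>z. f z \<noteq> \<infinity> \<Longrightarrow> L \<le> real_of_ereal (f z) + c * (norm (y - z))\<^sup>2"
proof -
  obtain a where "f a \<noteq> \<infinity>" using Gamma0D(2)[OF f] by blast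
  then obtain r where "f a = ereal r" using Gamma0_ereal_real[OF f] by blast
  then obtain A B where B: "0 \<le> B" and AB: "\<And>z. ereal (- A - B * norm (z - a)) \<le> f z"
    using convex_lsc_lower_bound_norm Gamma0D[OF f] by metis
  have "- A - B * norm (y - a) - B\<^sup>2 / (4 * c) \<le> real_of_ereal (f z) + c * (norm (y - z))\<^sup>2"
    if "f z \<noteq> \<infinity>" for z
  proof -
    have "- A - B * norm (z - a) \<le> real_of_ereal (f z)"
      using AB[of z] that Gamma0D(1)[OF f, of z] by (cases "f z") auto
    moreover have "B * norm (z - a) \<le> B * norm (y - z) + B * norm (y - a)"
      using norm_triangle_ineq[of "z - y" "y - a"] B
      by (simp add: norm_minus_commute mult_left_mono flip: distrib_left)
    moreover have "B * norm (y - z) \<le> c * (norm (y - z))\<^sup>2 + B\<^sup>2 / (4 * c)"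
    proof -
      have "0 \<le> (c * norm (y - z) - B / 2)\<^sup>2 / c" using c by simp
      also have "\<dots> = c * (norm (y - z))\<^sup>2 - B * norm (y - z) + B\<^sup>2 / (4 * c)"
        using c by (simp add: power2_eq_square field_simps)
      finally show ?thesis by simp
    qed
    ultimately show ?thesis by linarith
  qed
  with that show ?thesis by blast
qed

lemma Gamma0_quadratic_midpoint:
  fixes f :: "'a::real_inner \<Rightarrow> ereal" and c :: real and y :: 'a
  assumes f: "f \<in> Gamma0" and fin: "f u \<noteq> \<infinity>" "f v \<noteq> \<infinity>"
  defines "w \<equiv> (1/2) *\<^sub>R u + (1/2) *\<^sub>R v"
    and "\<phi> \<equiv> \<lambda>z. real_of_ereal (f z) + c * (norm (y - z))\<^sup>2"
  shows "f w \<noteq> \<infinity>" and "4 * \<phi> w + c * (norm (u - v))\<^sup>2 \<le> 2 * \<phi> u + 2 * \<phi> v"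
proof -
  note real = Gamma0_ereal_real[OF f]
  have fw: "f w \<le> ereal (real_of_ereal (f u) / 2 + real_of_ereal (f v) / 2)"
    using convex_funD_ereal[OF Gamma0D(3)[OF f] real[OF fin(1)] real[OF fin(2)], of "1/2"]
    by (simp add: w_def)
  then show "f w \<noteq> \<infinity>" by auto
  with fw real have "real_of_ereal (f w) \<le> real_of_ereal (f u) / 2 + real_of_ereal (f v) / 2"
    by (metis ereal_less_eq(3))
  then show "4 * \<phi> w + c * (norm (u - v))\<^sup>2 \<le> 2 * \<phi> u + 2 * \<phi> v"
    by (simp add: \<phi>_def w_def norm_diff_midpoint_sq field_simps)
qed

text \<open>\<open>p\<close> minimizes \<open>f + c \<parallel>y - \<cdot>\<parallel>\<^sup>2\<close>, that is, \<open>p\<close> is the proximal point of \<open>f/(2c)\<close> at \<open>y\<close>;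
  \<open>prox f\<close> is the case \<open>c = 1/2\<close>.\<close>

definition proximal_point :: "('a::real_normed_vector \<Rightarrow> ereal) \<Rightarrow> real \<Rightarrow> 'a \<Rightarrow> 'a \<Rightarrow> bool" where
  "proximal_point f c y p \<longleftrightarrow>
    (\<forall>z. f p + ereal (c * (norm (y - p))\<^sup>2) \<le> f z + ereal (c * (norm (y - z))\<^sup>2))"

lemma Gamma0_minimizing_sequence_Cauchy:
  fixes f :: "'a::real_inner \<Rightarrow> ereal" and c :: real and y :: 'a
  defines "\<phi> \<equiv> \<lambda>z. real_of_ereal (f z) + c * (norm (y - z))\<^sup>2"
  assumes f: "f \<in> Gamma0" and c: "0 < c"
    and m: "\<And>z. f z \<noteq> \<infinity> \<Longrightarrow> m \<le> \<phi> z"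
    and zs: "\<And>n. f (zs n) \<noteq> \<infinity>" "\<And>n. \<phi> (zs n) < m + 1 / Suc n"
  shows "Cauchy zs"
proof (rule Cauchy_if_norm_diff_sq_le)
  define e where "e n = 2 * (\<phi> (zs n) - m) / c" for n
  show "(norm (zs i - zs j))\<^sup>2 \<le> e i + e j" for i j
  proof -
    define w where "w = (1/2) *\<^sub>R zs i + (1/2) *\<^sub>R zs j"
    have "m \<le> \<phi> w"
      using Gamma0_quadratic_midpoint(1)[OF f zs(1) zs(1)] by (intro m) (simp add: w_def)
    moreover have "4 * \<phi> w + c * (norm (zs i - zs j))\<^sup>2 \<le> 2 * \<phi> (zs i) + 2 * \<phi> (zs j)"
      using Gamma0_quadratic_midpoint(2)[OF f zs(1) zs(1), where c = c and y = y]
      by (simp add: \<phi>_def w_def)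
    ultimately have "c * (norm (zs i - zs j))\<^sup>2 \<le> 2 * (\<phi> (zs i) - m) + 2 * (\<phi> (zs j) - m)"
      by simp
    also have "\<dots> = c * (e i + e j)" using c by (simp add: e_def field_simps)
    finally show ?thesis using c by simp
  qed
  show "e \<longlonglongrightarrow> 0"
  proof (rule tendsto_sandwich)
    have "0 \<le> e n" for n using m[OF zs(1)] c by (simp add: e_def)
    moreover have "e n \<le> 2 / c * inverse (Suc n)" for n
    proof -
      have "e n = 2 / c * (\<phi> (zs n) - m)" by (simp add: e_def)
      also have "\<dots> \<le> 2 / c * inverse (Suc n)"
        using zs(2)[of n] c by (intro mult_left_mono) (simp_all add: inverse_eq_divide)
      finally show ?thesis .
    qed
    ultimately show "\<forall>\<^sub>F n in sequentially. 0 \<le> e n"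
      "\<forall>\<^sub>F n in sequentially. e n \<le> 2 / c * inverse (Suc n)"
      by (simp_all add: always_eventually)
    show "(\<lambda>n. 2 / c * inverse (real (Suc n))) \<longlonglongrightarrow> 0"
      using tendsto_mult_right_zero[OF LIMSEQ_inverse_real_of_nat] .
  qed simp
qed

lemma proximal_point_if_minimizing_limit:
  fixes f :: "'a::real_inner \<Rightarrow> ereal"
  assumes f: "f \<in> Gamma0" and lim: "zs \<longlonglongrightarrow> p"
    and m: "\<And>z. f z \<noteq> \<infinity> \<Longrightarrow> m \<le> real_of_ereal (f z) + c * (norm (y - z))\<^sup>2"
    and zs: "\<And>n. f (zs n) \<noteq> \<infinity>"
      "\<And>n. real_of_ereal (f (zs n)) + c * (norm (y - zs n))\<^sup>2 < m + 1 / Suc n"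
  shows "proximal_point f c y p"
proof -
  have "f p + ereal (c * (norm (y - p))\<^sup>2) \<le> ereal m"
  proof (rule lsc_fun_add_continuous_limit_le[OF Gamma0D(4)[OF f] _ lim])
    show "isCont (\<lambda>z. c * (norm (y - z))\<^sup>2) p" by (intro continuous_intros)
    show "(\<lambda>n. m + 1 / Suc n) \<longlonglongrightarrow> m"
      using tendsto_add[OF tendsto_const LIMSEQ_inverse_real_of_nat]
      by (simp add: inverse_eq_divide)
    show "f (zs n) + ereal (c * (norm (y - zs n))\<^sup>2) \<le> ereal (m + 1 / Suc n)" for n
    proof -
      obtain a where "f (zs n) = ereal a" using Gamma0_ereal_real[OF f zs(1)] by blast
      with zs(2)[of n] show ?thesis by simp
    qed
  qed
  moreover have "ereal m \<le> f z + ereal (c * (norm (y - z))\<^sup>2)" for z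
  proof (cases "f z = \<infinity>")
    case False
    then obtain b where "f z = ereal b" using Gamma0_ereal_real[OF f] by blast
    with m[OF False] show ?thesis by simp
  qed simp
  ultimately show ?thesis
    unfolding proximal_point_def by (blast intro: order_trans)
qed

lemma proximal_point_exists:
  fixes f :: "'a::{real_inner,complete_space} \<Rightarrow> ereal"
  assumes f: "f \<in> Gamma0" and c: "0 < c"
  obtains p where "proximal_point f c y p"
proof -
  define \<phi> where "\<phi> z = real_of_ereal (f z) + c * (norm (y - z))\<^sup>2" for z
  define D where "D = {z. f z \<noteq> \<infinity>}"
  obtain L where "\<And>z. f z \<noteq> \<infinity> \<Longrightarrow> L \<le> \<phi> z"
    using Gamma0_quadratic_bdd_below[OF f c, where y = y] unfolding \<phi>_def by blast
  then have bdd: "bdd_below (\<phi> ` D)"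
    by (intro bdd_belowI2[where m = L]) (simp add: D_def)
  have "D \<noteq> {}" using Gamma0D(2)[OF f] by (auto simp: D_def)
  define m where "m = Inf (\<phi> ` D)"
  have m_le: "m \<le> \<phi> z" if "f z \<noteq> \<infinity>" for z
    unfolding m_def using bdd that by (auto simp: D_def intro: cInf_lower)
  have "\<exists>z\<in>D. \<phi> z < m + 1 / Suc n" for n
    using cInf_less_iff[OF _ bdd, of "m + 1 / Suc n"] \<open>D \<noteq> {}\<close> by (simp add: m_def)
  then have "\<forall>n. \<exists>z. z \<in> D \<and> \<phi> z < m + 1 / Suc n" by blast
  then have "\<exists>zs. \<forall>n. zs n \<in> D \<and> \<phi> (zs n) < m + 1 / Suc n" by (rule choice)
  then obtain zs where "\<forall>n. zs n \<in> D \<and> \<phi> (zs n) < m + 1 / Suc n" ..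
  then have zs: "\<And>n. f (zs n) \<noteq> \<infinity>"
      "\<And>n. real_of_ereal (f (zs n)) + c * (norm (y - zs n))\<^sup>2 < m + 1 / Suc n"
    by (simp_all add: D_def \<phi>_def)
  have m: "m \<le> real_of_ereal (f z) + c * (norm (y - z))\<^sup>2" if "f z \<noteq> \<infinity>" for z
    using m_le[OF that] by (simp add: \<phi>_def)
  have "Cauchy zs" using Gamma0_minimizing_sequence_Cauchy[OF f c m zs] .
  then obtain p where "zs \<longlonglongrightarrow> p" using Cauchy_convergent convergent_def by blast
  then have "proximal_point f c y p" using proximal_point_if_minimizing_limit[OF f _ m zs] by blast
  with that show ?thesis .
qed

lemma proximal_point_finite:
  assumes f: "f \<in> Gamma0" and p: "proximal_point f c y p"
  shows "f p \<noteq> \<infinity>"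
proof -
  obtain a where "f a \<noteq> \<infinity>" using Gamma0D(2)[OF f] by blast
  with p show ?thesis unfolding proximal_point_def
    by (metis PInfty_neq_ereal(1) ereal_infty_less_eq(1) ereal_plus_eq_PInfty)
qed

lemma proximal_point_subgradient:
  fixes f :: "'a::real_inner \<Rightarrow> ereal"
  assumes f: "f \<in> Gamma0" and p: "proximal_point f c y p"
  shows "f p + ereal (2 * c * ((y - p) \<bullet> (z - p))) \<le> f z"
proof (cases "f z = \<infinity>")
  case False
  then obtain b where b: "f z = ereal b" using Gamma0_ereal_real[OF f] by blast
  obtain a where a: "f p = ereal a"
    using Gamma0_ereal_real[OF f proximal_point_finite[OF f p]] by blast
  define S where "S = (y - p) \<bullet> (z - p)"
  define Q where "Q = (norm (z - p))\<^sup>2"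
  define P where "P = (norm (y - p))\<^sup>2"
  have step: "a + 2 * c * S - b \<le> t * (c * Q)" if t: "0 < t" "t \<le> 1" for t
  proof -
    define zt where "zt = (1 - t) *\<^sub>R p + t *\<^sub>R z"
    have "ereal (a + c * P) \<le> f zt + ereal (c * (norm (y - zt))\<^sup>2)"
      using p a by (simp add: proximal_point_def P_def)
    also have "\<dots> \<le> ereal ((1 - t) * a + t * b) + ereal (c * (norm (y - zt))\<^sup>2)"
      unfolding zt_def
        using convex_funD_ereal[OF Gamma0D(3)[OF f] a b] t by (intro add_right_mono) simp
    finally have "a + c * P \<le> (1 - t) * a + t * b + c * (norm (y - zt))\<^sup>2" by simp
    moreover have "(norm (y - zt))\<^sup>2 = P - 2 * t * S + t * t * Q"
    proof -
      have e: "y - zt = (y - p) - t *\<^sub>R (z - p)" by (simp add: zt_def algebra_simps)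
      show ?thesis
        unfolding e P_def Q_def S_def
        by (simp add: power2_norm_eq_inner inner_diff_left inner_diff_right inner_commute
            algebra_simps)
    qed
    ultimately have "t * (a + 2 * c * S - b) \<le> t * (t * (c * Q))"
      by (simp add: algebra_simps)
    then show ?thesis using t by simp
  qed
  have "a + 2 * c * S - b \<le> 0"
  proof (rule LIMSEQ_le_const)
    show "(\<lambda>n. inverse (real (Suc n)) * (c * Q)) \<longlonglongrightarrow> 0"
      by (rule tendsto_mult_left_zero[OF LIMSEQ_inverse_real_of_nat])
    show "\<exists>N. \<forall>n\<ge>N. a + 2 * c * S - b \<le> inverse (real (Suc n)) * (c * Q)"
      using step by (simp add: inverse_le_1_iff)
  qed
  then show ?thesis using a b by (simp add: S_def)
qed simp

lemma proximal_point_unique: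
  fixes f :: "'a::real_inner \<Rightarrow> ereal"
  assumes f: "f \<in> Gamma0" and c: "0 < c"
    and p: "proximal_point f c y p" and q: "proximal_point f c y q"
  shows "p = q"
proof -
  obtain a where a: "f p = ereal a"
    using Gamma0_ereal_real[OF f proximal_point_finite[OF f p]] by blast
  obtain b where b: "f q = ereal b"
    using Gamma0_ereal_real[OF f proximal_point_finite[OF f q]] by blast
  have "a + 2 * c * ((y - p) \<bullet> (q - p)) \<le> b" "b + 2 * c * ((y - q) \<bullet> (p - q)) \<le> a"
    using proximal_point_subgradient[OF f p, of q] proximal_point_subgradient[OF f q, of p] a b
      by simp_all
  then have "2 * c * ((y - p) \<bullet> (q - p)) + 2 * c * ((y - q) \<bullet> (p - q)) \<le> 0" by linarith
  also have "2 * c * ((y - p) \<bullet> (q - p)) + 2 * c * ((y - q) \<bullet> (p - q)) = 2 * c * (norm (p - q))\<^sup>2"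
    by (simp add: power2_norm_eq_inner inner_diff_left inner_diff_right inner_commute algebra_simps)
  finally have "c * (norm (p - q))\<^sup>2 \<le> 0" by simp
  then show ?thesis using c by (simp add: mult_le_0_iff)
qed

lemma prox_altdef: "prox f x = (THE p. proximal_point f (1/2) x p)"
  unfolding prox_def proximal_point_def by simp

lemma proximal_point_prox:
  fixes f :: "'a::{real_inner,complete_space} \<Rightarrow> ereal"
  assumes f: "f \<in> Gamma0"
  shows "proximal_point f (1/2) x (prox f x)"
proof -
  have "(0::real) < 1/2" by simp
  then obtain p where p: "proximal_point f (1/2) x p"
    using proximal_point_exists[OF f, where y = x] by blast
  show ?thesis
    unfolding prox_altdef
    by (rule theI[where P = "proximal_point f (1/2) x", OF p])
      (rule proximal_point_unique[OF f _ _ p]; simp)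
qed

lemma prox_eqI:
  fixes f :: "'a::{real_inner,complete_space} \<Rightarrow> ereal"
  assumes "f \<in> Gamma0" "proximal_point f (1/2) x p"
  shows "prox f x = p"
  using proximal_point_unique[OF assms(1) _ proximal_point_prox[OF assms(1)] assms(2)] by simp

lemma prox_finite:
  fixes f :: "'a::{real_inner,complete_space} \<Rightarrow> ereal"
  shows "f \<in> Gamma0 \<Longrightarrow> f (prox f x) \<noteq> \<infinity>"
  using proximal_point_finite proximal_point_prox by blast

lemma prox_subgradient:
  fixes f :: "'a::{real_inner,complete_space} \<Rightarrow> ereal"
  assumes "f \<in> Gamma0"
  shows "f (prox f x) + ereal ((x - prox f x) \<bullet> (z - prox f x)) \<le> f z"
  using proximal_point_subgradient[OF assms proximal_point_prox[OF assms]] by simp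

lemma prox_eq_if_subgradient:
  fixes f :: "'a::{real_inner,complete_space} \<Rightarrow> ereal"
  assumes f: "f \<in> Gamma0" and sub: "\<And>z. f p + ereal ((x - p) \<bullet> (z - p)) \<le> f z"
  shows "prox f x = p"
proof (rule prox_eqI[OF f], unfold proximal_point_def, intro allI)
  fix z
  have "(norm (x - p))\<^sup>2 / 2 + (norm (z - p))\<^sup>2 / 2 = (x - p) \<bullet> (z - p) + (norm (x - z))\<^sup>2 / 2"
    by (simp add: power2_norm_eq_inner inner_diff_left inner_diff_right inner_commute field_simps)
  then have "1/2 * (norm (x - p))\<^sup>2 \<le> (x - p) \<bullet> (z - p) + 1/2 * (norm (x - z))\<^sup>2"
    using zero_le_power2[of "norm (z - p)"] by linarith
  then have "f p + ereal (1/2 * (norm (x - p))\<^sup>2)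
      \<le> f p + ereal ((x - p) \<bullet> (z - p) + 1/2 * (norm (x - z))\<^sup>2)"
    by (intro add_left_mono) simp
  also have "\<dots> = (f p + ereal ((x - p) \<bullet> (z - p))) + ereal (1/2 * (norm (x - z))\<^sup>2)"
    by (simp add: add.assoc)
  also have "\<dots> \<le> f z + ereal (1/2 * (norm (x - z))\<^sup>2)"
    by (rule add_right_mono[OF sub])
  finally show "f p + ereal (1/2 * (norm (x - p))\<^sup>2) \<le> f z + ereal (1/2 * (norm (x - z))\<^sup>2)" .
qed

lemma prox_le:
  fixes f :: "'a::{real_inner,complete_space} \<Rightarrow> ereal"
  assumes f: "f \<in> Gamma0" and z: "f z \<noteq> \<infinity>"
  shows "real_of_ereal (f (prox f x)) + (norm (x - prox f x))\<^sup>2 / 2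
    \<le> real_of_ereal (f z) + (norm (x - z))\<^sup>2 / 2"
proof -
  obtain a where a: "f (prox f x) = ereal a"
    using Gamma0_ereal_real[OF f prox_finite[OF f]] by blast
  obtain b where b: "f z = ereal b" using Gamma0_ereal_real[OF f z] by blast
  have "f (prox f x) + ereal (1/2 * (norm (x - prox f x))\<^sup>2) \<le> f z + ereal (1/2 * (norm (x - z))\<^sup>2)"
    using proximal_point_prox[OF f, of x] unfolding proximal_point_def by blast
  then show ?thesis using a b by simp
qed

section \<open>Convex functions whose gradients have equal norms\<close>

definition subgradient_selection :: "('a::real_inner \<Rightarrow> real) \<Rightarrow> ('a \<Rightarrow> 'a) \<Rightarrow> bool" where
  "subgradient_selection h G \<longleftrightarrow> (\<forall>x y. h x + G x \<bullet> (y - x) \<le> h y)"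

definition firmly_nonexpansive :: "('a::real_inner \<Rightarrow> 'a) \<Rightarrow> bool" where
  "firmly_nonexpansive G \<longleftrightarrow> (\<forall>x y. (norm (G x - G y))\<^sup>2 \<le> (x - y) \<bullet> (G x - G y))"

lemma firmly_nonexpansive_diff_const:
  "firmly_nonexpansive G \<Longrightarrow> firmly_nonexpansive (\<lambda>x. G x - c)"
  by (simp add: firmly_nonexpansive_def)

lemma firmly_nonexpansive_imp_lipschitz:
  assumes "firmly_nonexpansive G"
  shows "1-lipschitz_on S G"
proof (rule lipschitz_onI)
  fix x y
  have "(norm (G x - G y))\<^sup>2 \<le> (x - y) \<bullet> (G x - G y)"
    using assms by (simp add: firmly_nonexpansive_def)
  also have "\<dots> \<le> norm (x - y) * norm (G x - G y)"
    by (rule Cauchy_Schwarz_ineq2[THEN abs_le_D1])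
  finally show "dist (G x) (G y) \<le> 1 * dist x y"
    by (cases "G x = G y") (simp_all add: dist_norm power2_eq_square)
qed simp

text \<open>Compare the subgradient inequalities at \<open>x\<close> and at \<open>x + w/2\<close>, where \<open>w = G1 x - G2 x\<close>.\<close>

lemma gradients_eq_if_diff_const:
  assumes h1: "subgradient_selection h1 G1" and h2: "subgradient_selection h2 G2"
    and lip: "1-lipschitz_on UNIV G2" and const: "\<And>x. h1 x - h2 x = c"
  shows "G1 x = G2 x"
proof -
  define w where "w = G1 x - G2 x"
  define y where "y = x + (1/2) *\<^sub>R w"
  have "G1 x \<bullet> (y - x) \<le> h1 y - h1 x" "h2 y - h2 x \<le> G2 y \<bullet> (y - x)"
    using h1 h2 unfolding subgradient_selection_def
      by (smt (verit) inner_minus_right minus_diff_eq)+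
  moreover have "h1 y - h1 x = h2 y - h2 x" using const[of x] const[of y] by simp
  ultimately have "(G1 x - G2 y) \<bullet> w \<le> 0" by (simp add: y_def inner_diff_left)
  moreover have "G1 x - G2 y = w - (G2 y - G2 x)" by (simp add: w_def)
  ultimately have "(norm w)\<^sup>2 \<le> (G2 y - G2 x) \<bullet> w"
    by (simp add: inner_diff_left power2_norm_eq_inner)
  also have "\<dots> \<le> norm (G2 y - G2 x) * norm w"
    by (rule Cauchy_Schwarz_ineq2[THEN abs_le_D1])
  also have "\<dots> \<le> norm (y - x) * norm w"
    using lipschitz_onD[OF lip, of y x] by (simp add: dist_norm mult_right_mono)
  also have "\<dots> = (norm w)\<^sup>2 / 2" by (simp add: y_def power2_eq_square)
  finally show ?thesis by (simp add: w_def)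
qed

locale equal_gradient_norms =
  fixes h1 h2 :: "'a::real_inner \<Rightarrow> real" and G1 G2 :: "'a \<Rightarrow> 'a"
  assumes subgradient1: "subgradient_selection h1 G1"
    and subgradient2: "subgradient_selection h2 G2"
    and firmly_nonexpansive1: "firmly_nonexpansive G1"
    and norm_eq: "\<And>x. norm (G1 x) = norm (G2 x)"
    and bdd_below1: "bdd_below (range h1)"
    and bdd_below2: "bdd_below (range h2)"
begin

lemma subgradient1_ineq: "h1 u + G1 u \<bullet> (v - u) \<le> h1 v"
  using subgradient1 by (simp add: subgradient_selection_def)

lemma subgradient2_ineq: "h2 u + G2 u \<bullet> (v - u) \<le> h2 v"
  using subgradient2 by (simp add: subgradient_selection_def)

lemma G1_nonexpansive: "norm (G1 u - G1 v) \<le> norm (u - v)"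
  using lipschitz_onD[OF firmly_nonexpansive_imp_lipschitz[OF firmly_nonexpansive1] UNIV_I UNIV_I]
  by (simp add: dist_norm)

lemma Inf_le_h1: "(INF z. h1 z) \<le> h1 u"
  using bdd_below1 by (simp add: cInf_lower)

end

locale gradient_descent = equal_gradient_norms h1 h2 G1 G2
  for h1 h2 :: "'a::real_inner \<Rightarrow> real" and G1 G2 :: "'a \<Rightarrow> 'a" +
  fixes \<tau> :: real and x :: 'a
  assumes step_pos: "0 < \<tau>" and step_le_half: "\<tau> \<le> 1/2"
begin

primrec descent :: "nat \<Rightarrow> 'a" where
  "descent 0 = x"
| "descent (Suc k) = descent k - \<tau> *\<^sub>R G1 (descent k)"

abbreviation grad :: "nat \<Rightarrow> 'a" where
  "grad k \<equiv> G1 (descent k)"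

lemma descent_diff_Suc: "descent k - descent (Suc k) = \<tau> *\<^sub>R grad k"
  by simp

lemma grad_Suc_inner: "(1 - \<tau>) * (norm (grad k))\<^sup>2 \<le> grad (Suc k) \<bullet> grad k"
proof -
  have "norm (grad k - grad (Suc k)) \<le> \<tau> * norm (grad k)"
    using G1_nonexpansive[of "descent k" "descent (Suc k)"] step_pos
    by (simp only: descent_diff_Suc norm_scaleR)
  then have "norm (grad k - grad (Suc k)) * norm (grad k) \<le> \<tau> * norm (grad k) * norm (grad k)"
    by (simp add: mult_right_mono)
  moreover have "(grad k - grad (Suc k)) \<bullet> grad k \<le> norm (grad k - grad (Suc k)) * norm (grad k)"
    by (rule Cauchy_Schwarz_ineq2[THEN abs_le_D1])
  moreover have "grad (Suc k) \<bullet> grad k = (norm (grad k))\<^sup>2 - (grad k - grad (Suc k)) \<bullet> grad k"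
    by (simp add: inner_diff_left power2_norm_eq_inner)
  ultimately show ?thesis
    by (simp add: power2_eq_square left_diff_distrib)
qed

lemma grad_norm_Suc_le: "norm (grad (Suc k)) \<le> norm (grad k)"
proof -
  define d where "d = grad k - grad (Suc k)"
  have "(norm d)\<^sup>2 \<le> (descent k - descent (Suc k)) \<bullet> d"
    using firmly_nonexpansive1 unfolding firmly_nonexpansive_def d_def by blast
  then have d: "(norm d)\<^sup>2 \<le> \<tau> * (grad k \<bullet> d)"
    by (simp only: descent_diff_Suc inner_scaleR_left)
  then have "0 \<le> grad k \<bullet> d"
    using step_pos by (smt (verit) mult_pos_neg zero_le_power2)
  have "(norm (grad (Suc k)))\<^sup>2 = (norm (grad k))\<^sup>2 - 2 * (grad k \<bullet> d) + (norm d)\<^sup>2"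
    by (simp add: d_def power2_norm_eq_inner inner_diff_left inner_diff_right inner_commute)
  also have "\<dots> \<le> (norm (grad k))\<^sup>2"
    using d \<open>0 \<le> grad k \<bullet> d\<close> step_le_half mult_right_mono[of \<tau> 1 "grad k \<bullet> d"] by simp
  finally show ?thesis by (simp add: power2_le_iff_abs_le)
qed

lemma h1_descent_Suc: "h1 (descent (Suc k)) + \<tau> * (1 - \<tau>) * (norm (grad k))\<^sup>2 \<le> h1 (descent k)"
proof -
  have "h1 (descent (Suc k)) + \<tau> * (grad (Suc k) \<bullet> grad k) \<le> h1 (descent k)"
    using subgradient1_ineq[of "descent (Suc k)" "descent k"]
    by (simp only: descent_diff_Suc inner_scaleR_right)
  moreover have "\<tau> * ((1 - \<tau>) * (norm (grad k))\<^sup>2) \<le> \<tau> * (grad (Suc k) \<bullet> grad k)"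
    using grad_Suc_inner step_pos by (intro mult_left_mono) auto
  ultimately show ?thesis by (simp add: mult.assoc)
qed

lemma h1_descent_Suc_half: "h1 (descent (Suc k)) + \<tau> / 2 * (norm (grad k))\<^sup>2 \<le> h1 (descent k)"
proof -
  have "\<tau> / 2 * (norm (grad k))\<^sup>2 \<le> \<tau> * (1 - \<tau>) * (norm (grad k))\<^sup>2"
    using step_pos step_le_half by (intro mult_right_mono) auto
  with h1_descent_Suc[of k] show ?thesis by simp
qed

text \<open>\<open>(1 + 2\<tau>) h1 - h2\<close> is a Lyapunov function for the descent; this is where
  \<open>\<parallel>G1\<parallel> = \<parallel>G2\<parallel>\<close> and \<open>\<tau> \<le> 1/2\<close> are used.\<close>

lemma potential_descent_Suc:
  "(1 + 2 * \<tau>) * h1 (descent (Suc k)) - h2 (descent (Suc k))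
    \<le> (1 + 2 * \<tau>) * h1 (descent k) - h2 (descent k)"
proof -
  define X where "X = (norm (grad k))\<^sup>2"
  have "h2 (descent k) - \<tau> * (G2 (descent k) \<bullet> grad k) \<le> h2 (descent (Suc k))"
    using subgradient2_ineq[of "descent k" "descent (Suc k)"]
    by (simp add: inner_diff_right)
  moreover have "G2 (descent k) \<bullet> grad k \<le> X"
    using Cauchy_Schwarz_ineq2[THEN abs_le_D1, of "G2 (descent k)" "grad k"] norm_eq[of "descent k"]
    by (simp add: X_def power2_eq_square)
  then have "\<tau> * (G2 (descent k) \<bullet> grad k) \<le> \<tau> * X"
    using step_pos by (intro mult_left_mono) auto
  ultimately have h2: "h2 (descent k) - \<tau> * X \<le> h2 (descent (Suc k))"
    by linarith
  have "(1 + 2 * \<tau>) * (h1 (descent (Suc k)) + \<tau> * (1 - \<tau>) * X) \<le> (1 + 2 * \<tau>) * h1 (descent k)"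
    using h1_descent_Suc step_pos by (intro mult_left_mono) (simp_all add: X_def)
  moreover have "\<tau> * X \<le> (1 + 2 * \<tau>) * (\<tau> * (1 - \<tau>) * X)"
  proof -
    have "0 \<le> \<tau>\<^sup>2 * X * (1 - 2 * \<tau>)" using step_le_half by (simp add: X_def)
    then show ?thesis by (simp add: algebra_simps power2_eq_square)
  qed
  ultimately show ?thesis using h2 by (simp add: distrib_left)
qed

lemma potential_descent_le:
  "(1 + 2 * \<tau>) * h1 (descent n) - h2 (descent n) \<le> (1 + 2 * \<tau>) * h1 x - h2 x"
proof (induction n)
  case (Suc n)
  then show ?case using potential_descent_Suc[of n] by linarith
qed simp

lemma h1_descent_sum: "h1 (descent N) + \<tau> / 2 * (\<Sum>k<N. (norm (grad k))\<^sup>2) \<le> h1 x"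
proof (induction N)
  case (Suc N)
  then show ?case using h1_descent_Suc_half[of N] by (simp add: distrib_left)
qed simp

lemma h1_descent_tail:
  assumes "M \<le> N"
  shows "h1 (descent N) + \<tau> / 2 * real (N - M) * (norm (grad N))\<^sup>2 \<le> h1 (descent M)"
  using assms
proof (induction N rule: dec_induct)
  case (step n)
  define a where "a = real (n - M)"
  have eq: "real (Suc n - M) = a + 1" using step.hyps by (simp add: a_def Suc_diff_le)
  have "\<tau> / 2 * (a + 1) * (norm (grad (Suc n)))\<^sup>2 \<le> \<tau> / 2 * (a + 1) * (norm (grad n))\<^sup>2"
    using grad_norm_Suc_le[of n] step_pos by (intro mult_left_mono power_mono) (auto simp: a_def)
  moreover have "\<tau> / 2 * (a + 1) * (norm (grad n))\<^sup>2
      = \<tau> / 2 * (norm (grad n))\<^sup>2 + \<tau> / 2 * a * (norm (grad n))\<^sup>2"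
    by (simp add: algebra_simps)
  ultimately show ?case
    using h1_descent_Suc_half[of n] step.IH unfolding eq a_def by linarith
qed simp

lemma descent_dist: "norm (descent N - x) \<le> \<tau> * (\<Sum>k<N. norm (grad k))"
proof (induction N)
  case (Suc N)
  have "norm (descent (Suc N) - x) \<le> norm (descent N - x) + norm (\<tau> *\<^sub>R grad N)"
    using norm_triangle_ineq4[of "descent N - x" "\<tau> *\<^sub>R grad N"] by (simp add: algebra_simps)
  with Suc step_pos show ?case by (simp add: distrib_left)
qed simp

lemma descent_dist_sq: "(norm (descent N - x))\<^sup>2 \<le> 2 * \<tau> * real N * (h1 x - (INF z. h1 z))"
proof -
  have "(\<Sum>k<N. norm (grad k) * 1)\<^sup>2 \<le> (\<Sum>k<N. (norm (grad k))\<^sup>2) * (\<Sum>k<N. 1\<^sup>2)"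
    by (rule Cauchy_Schwarz_ineq_sum)
  then have CS: "(\<Sum>k<N. norm (grad k))\<^sup>2 \<le> real N * (\<Sum>k<N. (norm (grad k))\<^sup>2)"
    by (simp add: mult.commute)
  have sum: "\<tau> * (\<Sum>k<N. (norm (grad k))\<^sup>2) \<le> 2 * (h1 x - (INF z. h1 z))"
    using h1_descent_sum[of N] Inf_le_h1[of "descent N"] by simp
  have "(norm (descent N - x))\<^sup>2 \<le> \<tau>\<^sup>2 * (\<Sum>k<N. norm (grad k))\<^sup>2"
    using descent_dist[of N] by (simp add: power_mono flip: power_mult_distrib)
  also have "\<dots> \<le> \<tau>\<^sup>2 * (real N * (\<Sum>k<N. (norm (grad k))\<^sup>2))"
    using CS by (simp add: mult_left_mono)
  also have "\<dots> = \<tau> * real N * (\<tau> * (\<Sum>k<N. (norm (grad k))\<^sup>2))"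
    by (simp add: power2_eq_square)
  also have "\<dots> \<le> \<tau> * real N * (2 * (h1 x - (INF z. h1 z)))"
    using sum step_pos by (intro mult_left_mono) auto
  finally show ?thesis by (simp add: mult_ac)
qed

text \<open>Since \<open>h1\<close> decreases along the descent by at least \<open>\<tau>/2 \<parallel>grad k\<parallel>\<^sup>2\<close> per step
  and \<open>\<parallel>grad k\<parallel>\<close> is nonincreasing, the drop of \<open>h1\<close> between steps \<open>M\<close> and \<open>2M\<close>,
  which tends to zero, controls \<open>M \<parallel>grad (2M)\<parallel>\<^sup>2\<close>.\<close>

lemma small_gradient:
  assumes "0 < \<theta>"
  obtains N where "0 < N" "\<tau> * real N * (norm (grad N))\<^sup>2 \<le> \<theta>"
proof -
  have dec: "decseq (\<lambda>k. h1 (descent k))"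
  proof (rule decseq_SucI)
    fix k
    have "0 \<le> \<tau> / 2 * (norm (grad k))\<^sup>2" using step_pos by simp
    with h1_descent_Suc_half[of k] show "h1 (descent (Suc k)) \<le> h1 (descent k)" by linarith
  qed
  obtain L where "(\<lambda>k. h1 (descent k)) \<longlonglongrightarrow> L"
    using decseq_convergent[OF dec, of "INF z. h1 z"] Inf_le_h1 by blast
  then have "Cauchy (\<lambda>k. h1 (descent k))" by (rule LIMSEQ_imp_Cauchy)
  moreover have "0 < \<theta> / 4" using assms by simp
  ultimately obtain M0 where M0: "\<forall>m\<ge>M0. \<forall>n\<ge>M0. norm (h1 (descent m) - h1 (descent n)) < \<theta> / 4"
    using CauchyD by blast
  define M where "M = Suc M0"
  define P where "P = \<tau> * real M * (norm (grad (2 * M)))\<^sup>2"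
  have "h1 (descent (2 * M)) + P / 2 \<le> h1 (descent M)"
    using h1_descent_tail[of M "2 * M"] by (simp add: P_def)
  moreover have "norm (h1 (descent M) - h1 (descent (2 * M))) < \<theta> / 4"
    using M0 by (simp add: M_def del: descent.simps)
  ultimately have "2 * P \<le> \<theta>"
    using abs_ge_self[of "h1 (descent M) - h1 (descent (2 * M))"] by simp
  moreover have "\<tau> * real (2 * M) * (norm (grad (2 * M)))\<^sup>2 = 2 * P" by (simp add: P_def)
  ultimately show ?thesis by (intro that[of "2 * M"]) (simp_all add: M_def)
qed

lemma grad_dist_sq_le:
  assumes "0 < N"
  shows "(norm (grad N) * norm (descent N - w))\<^sup>2
    \<le> (4 * (h1 x - (INF z. h1 z)) + 2 * (norm (x - w))\<^sup>2 / \<tau>) * (\<tau> * real N * (norm (grad N))\<^sup>2)"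
proof -
  define C where "C = h1 x - (INF z. h1 z)"
  define R where "R = norm (x - w)"
  define g where "g = (norm (grad N))\<^sup>2"
  define \<theta> where "\<theta> = \<tau> * real N * g"
  have "0 \<le> C" using Inf_le_h1[of x] by (simp add: C_def)
  have "\<tau> * g * 1 \<le> \<tau> * g * real N"
    using assms step_pos by (intro mult_left_mono) (simp_all add: g_def)
  then have "\<tau> * g \<le> \<theta>" by (simp add: \<theta>_def mult_ac)
  then have "\<tau> * g * R\<^sup>2 \<le> \<theta> * R\<^sup>2" by (rule mult_right_mono) simp
  then have g_R: "g * R\<^sup>2 \<le> \<theta> * (R\<^sup>2 / \<tau>)"
    using step_pos by (simp add: field_simps)
  have "g * (norm (descent N - x))\<^sup>2 \<le> g * (2 * \<tau> * real N * C)"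
    using descent_dist_sq[of N] by (simp add: g_def C_def mult_left_mono)
  also have "\<dots> = 2 * C * \<theta>" by (simp add: \<theta>_def mult_ac)
  finally have g_x: "g * (norm (descent N - x))\<^sup>2 \<le> 2 * C * \<theta>" .
  have sq: "(a + R)\<^sup>2 \<le> 2 * (a\<^sup>2 + R\<^sup>2)" for a :: real
    using zero_le_power2[of "a - R"] by (simp add: power2_eq_square algebra_simps)
  have "(norm (grad N) * norm (descent N - w))\<^sup>2 \<le> (norm (grad N) * (norm (descent N - x) + R))\<^sup>2"
    using norm_triangle_ineq[of "descent N - x" "x - w"]
    by (intro power_mono mult_left_mono) (simp_all add: R_def)
  also have "\<dots> = g * (norm (descent N - x) + R)\<^sup>2" by (simp add: g_def power_mult_distrib)
  also have "\<dots> \<le> g * (2 * ((norm (descent N - x))\<^sup>2 + R\<^sup>2))"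
    using sq by (intro mult_left_mono) (simp_all add: g_def)
  also have "\<dots> = 2 * (g * (norm (descent N - x))\<^sup>2) + 2 * (g * R\<^sup>2)"
    by algebra
  also have "\<dots> \<le> 2 * (2 * C * \<theta>) + 2 * (\<theta> * (R\<^sup>2 / \<tau>))"
    using g_x g_R by (intro add_mono mult_left_mono) simp_all
  also have "\<dots> = (4 * C + 2 * R\<^sup>2 / \<tau>) * \<theta>" by (simp add: algebra_simps)
  finally show ?thesis by (simp add: C_def R_def g_def \<theta>_def)
qed

lemma grad_dist_small:
  assumes "0 < \<epsilon>"
  obtains N where "norm (grad N) * norm (descent N - w) \<le> \<epsilon>"
proof -
  define K where "K = 4 * (h1 x - (INF z. h1 z)) + 2 * (norm (x - w))\<^sup>2 / \<tau>"
  define \<theta> where "\<theta> = \<epsilon>\<^sup>2 / (K + 1)"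
  have "0 \<le> K" using Inf_le_h1[of x] step_pos by (simp add: K_def)
  then have "0 < \<theta>" using assms by (simp add: \<theta>_def)
  then obtain N where "0 < N" and N: "\<tau> * real N * (norm (grad N))\<^sup>2 \<le> \<theta>"
    by (rule small_gradient)
  have "(norm (grad N) * norm (descent N - w))\<^sup>2 \<le> K * (\<tau> * real N * (norm (grad N))\<^sup>2)"
    using grad_dist_sq_le[OF \<open>0 < N\<close>, of w] by (simp add: K_def)
  also have "\<dots> \<le> K * \<theta>" using N \<open>0 \<le> K\<close> by (rule mult_left_mono)
  also have "\<dots> \<le> (K + 1) * \<theta>" using \<open>0 < \<theta>\<close> by simp
  also have "\<dots> = \<epsilon>\<^sup>2" using \<open>0 \<le> K\<close> by (simp add: \<theta>_def)
  finally have "norm (grad N) * norm (descent N - w) \<le> \<epsilon>"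
    by (rule power2_le_imp_le) (use assms in simp)
  with that show ?thesis .
qed

lemma h2_descent_near_Inf:
  assumes "0 < \<eta>"
  obtains N where "h2 (descent N) \<le> (INF z. h2 z) + \<eta>"
proof -
  obtain w where w: "h2 w < (INF z. h2 z) + \<eta> / 2"
    using cInf_less_iff[OF _ bdd_below2, of "(INF z. h2 z) + \<eta> / 2"] assms by auto
  obtain N where N: "norm (grad N) * norm (descent N - w) \<le> \<eta> / 2"
    using grad_dist_small assms by (metis half_gt_zero)
  have "h2 (descent N) \<le> h2 w + G2 (descent N) \<bullet> (descent N - w)"
    using subgradient2_ineq[of "descent N" w] by (simp add: inner_diff_right)
  moreover have "G2 (descent N) \<bullet> (descent N - w) \<le> norm (grad N) * norm (descent N - w)"
    using Cauchy_Schwarz_ineq2[THEN abs_le_D1, of "G2 (descent N)" "descent N - w"] norm_eq by simp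
  ultimately have "h2 (descent N) \<le> h2 w + norm (grad N) * norm (descent N - w)" by linarith
  with w N have "h2 (descent N) \<le> (INF z. h2 z) + \<eta>" by linarith
  with that show ?thesis .
qed

lemma excess_bound:
  assumes "0 < \<eta>"
  shows "h2 x - (INF z. h2 z) \<le> (1 + 2 * \<tau>) * (h1 x - (INF z. h1 z)) + \<eta>"
proof -
  obtain N where N: "h2 (descent N) \<le> (INF z. h2 z) + \<eta>"
    using h2_descent_near_Inf[OF assms] .
  have "(1 + 2 * \<tau>) * (INF z. h1 z) \<le> (1 + 2 * \<tau>) * h1 (descent N)"
    using Inf_le_h1 step_pos by (intro mult_left_mono) auto
  moreover have "(1 + 2 * \<tau>) * (h1 x - (INF z. h1 z))
      = (1 + 2 * \<tau>) * h1 x - (1 + 2 * \<tau>) * (INF z. h1 z)"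
    by (rule right_diff_distrib)
  ultimately show ?thesis using N potential_descent_le[of N] by linarith
qed

end

lemma (in equal_gradient_norms) excess_le: "h2 x - (INF z. h2 z) \<le> h1 x - (INF z. h1 z)"
proof (rule field_le_epsilon)
  fix e :: real assume e: "0 < e"
  define C where "C = h1 x - (INF z. h1 z)"
  have C: "0 \<le> C" using Inf_le_h1[of x] by (simp add: C_def)
  define \<tau> where "\<tau> = min (1/2) (e / (4 * (C + 1)))"
  have \<tau>: "0 < \<tau>" "\<tau> \<le> 1/2" "\<tau> \<le> e / (4 * (C + 1))"
    using e C unfolding \<tau>_def by (simp_all only: min.cobounded1 min.cobounded2) simp
  interpret gradient_descent h1 h2 G1 G2 \<tau> x
    using \<tau>
      by (intro gradient_descent.intro equal_gradient_norms_axioms gradient_descent_axioms.intro)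
      auto
  have "2 * \<tau> * C \<le> 2 * (e / (4 * (C + 1))) * C" using \<tau> C by (intro mult_right_mono) auto
  also have "\<dots> \<le> e / 2" using e C by (simp add: field_simps)
  moreover have "(1 + 2 * \<tau>) * C = C + 2 * \<tau> * C" by (simp add: algebra_simps)
  ultimately show "h2 x - (INF z. h2 z) \<le> h1 x - (INF z. h1 z) + e"
    using excess_bound[of "e / 2"] e unfolding C_def by linarith
qed

theorem diff_Inf_eq_if_gradient_norms_eq:
  fixes h1 h2 :: "'a::real_inner \<Rightarrow> real"
  assumes "subgradient_selection h1 G1" "subgradient_selection h2 G2"
    and "firmly_nonexpansive G1" "firmly_nonexpansive G2"
    and "\<And>x. norm (G1 x) = norm (G2 x)"
    and "bdd_below (range h1)" "bdd_below (range h2)"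
  shows "h1 x - (INF z. h1 z) = h2 x - (INF z. h2 z)"
proof -
  interpret equal_gradient_norms h1 h2 G1 G2
    using assms by unfold_locales
  interpret swapped: equal_gradient_norms h2 h1 G2 G1
    using assms by unfold_locales simp_all
  show ?thesis using excess_le[of x] swapped.excess_le[of x] by simp
qed

section \<open>The prox potential\<close>

lemma firmly_nonexpansive_prox:
  fixes f :: "'a::{real_inner,complete_space} \<Rightarrow> ereal"
  assumes f: "f \<in> Gamma0"
  shows "firmly_nonexpansive (prox f)"
  unfolding firmly_nonexpansive_def
proof (intro allI)
  fix x y
  obtain a where a: "f (prox f x) = ereal a"
    using Gamma0_ereal_real[OF f prox_finite[OF f]] by blast
  obtain b where b: "f (prox f y) = ereal b"
    using Gamma0_ereal_real[OF f prox_finite[OF f]] by blast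
  have "a + (x - prox f x) \<bullet> (prox f y - prox f x) \<le> b"
      "b + (y - prox f y) \<bullet> (prox f x - prox f y) \<le> a"
    using prox_subgradient[OF f, of x "prox f y"] prox_subgradient[OF f, of y "prox f x"] a b
      by simp_all
  then have "(x - prox f x) \<bullet> (prox f y - prox f x) + (y - prox f y) \<bullet> (prox f x - prox f y) \<le> 0"
    by linarith
  also have "(x - prox f x) \<bullet> (prox f y - prox f x) + (y - prox f y) \<bullet> (prox f x - prox f y)
      = (norm (prox f x - prox f y))\<^sup>2 - (x - y) \<bullet> (prox f x - prox f y)"
    by (simp add: power2_norm_eq_inner inner_diff_left inner_diff_right inner_commute algebra_simps)
  finally show "(norm (prox f x - prox f y))\<^sup>2 \<le> (x - y) \<bullet> (prox f x - prox f y)" by simp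
qed

text \<open>\<open>\<parallel>x - x0\<parallel>\<^sup>2/2\<close> minus the Moreau envelope of \<open>f\<close> at \<open>x\<close>.\<close>

definition prox_potential :: "('a::real_inner \<Rightarrow> ereal) \<Rightarrow> 'a \<Rightarrow> 'a \<Rightarrow> real" where
  "prox_potential f x0 x =
    (norm (x - x0))\<^sup>2 / 2 - real_of_ereal (f (prox f x)) - (norm (x - prox f x))\<^sup>2 / 2"

lemma prox_potential_subgradient:
  fixes f :: "'a::{real_inner,complete_space} \<Rightarrow> ereal"
  assumes f: "f \<in> Gamma0"
  shows "subgradient_selection (prox_potential f x0) (\<lambda>x. prox f x - x0)"
  unfolding subgradient_selection_def
proof (intro allI)
  fix x y
  have "real_of_ereal (f (prox f y)) + (norm (y - prox f y))\<^sup>2 / 2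
      \<le> real_of_ereal (f (prox f x)) + (norm (y - prox f x))\<^sup>2 / 2"
    by (rule prox_le[OF f prox_finite[OF f]])
  moreover have "(norm (y - x0))\<^sup>2 - (norm (y - prox f x))\<^sup>2
      - ((norm (x - x0))\<^sup>2 - (norm (x - prox f x))\<^sup>2) = 2 * ((prox f x - x0) \<bullet> (y - x))"
    by (simp add: power2_norm_eq_inner inner_diff_left inner_diff_right inner_commute algebra_simps)
  ultimately show "prox_potential f x0 x + (prox f x - x0) \<bullet> (y - x) \<le> prox_potential f x0 y"
    unfolding prox_potential_def by (simp add: field_simps)
qed

lemma bdd_below_prox_potential:
  fixes f :: "'a::{real_inner,complete_space} \<Rightarrow> ereal"
  assumes "f \<in> Gamma0" "f x0 \<noteq> \<infinity>"
  shows "bdd_below (range (prox_potential f x0))"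
proof (rule bdd_belowI2)
  show "- real_of_ereal (f x0) \<le> prox_potential f x0 x" for x
    using prox_le[OF assms, of x] unfolding prox_potential_def by simp
qed

lemma prox_potential_diff_eq:
  fixes f g :: "'a::{real_inner,complete_space} \<Rightarrow> ereal"
  assumes f: "f \<in> Gamma0" and g: "g \<in> Gamma0" and same: "prox f x = prox g x"
  shows "g (prox f x) = f (prox f x) + ereal (prox_potential f a x - prox_potential g a x)"
proof -
  obtain a where a: "f (prox f x) = ereal a"
    using Gamma0_ereal_real[OF f prox_finite[OF f]] by blast
  have "g (prox f x) \<noteq> \<infinity>" using prox_finite[OF g, of x] same by simp
  then obtain b where b: "g (prox f x) = ereal b" using Gamma0_ereal_real[OF g] by blast
  show ?thesis using same a b by (simp add: prox_potential_def)
qed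

lemma proximal_point_near:
  fixes f :: "'a::{real_inner,complete_space} \<Rightarrow> ereal"
  assumes f: "f \<in> Gamma0" and y: "f y \<noteq> \<infinity>" and \<epsilon>: "0 < \<epsilon>"
  obtains c where "0 < c" "\<And>p. proximal_point f c y p \<Longrightarrow> norm (y - p) < \<epsilon>"
proof -
  obtain r where r: "f y = ereal r" using Gamma0_ereal_real[OF f y] by blast
  obtain A B where B: "0 \<le> B" and AB: "\<And>z. ereal (- A - B * norm (z - y)) \<le> f z"
    using convex_lsc_lower_bound_norm[OF Gamma0D(3,4)[OF f] Gamma0D(1)[OF f] r] by metis
  define K where "K = \<bar>A + r\<bar>"
  define c where "c = (K / \<epsilon> + B + 1) / \<epsilon>"
  have "0 < c" using \<epsilon> B by (simp add: c_def K_def add_nonneg_pos)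
  moreover have "norm (y - p) < \<epsilon>" if p: "proximal_point f c y p" for p
  proof (rule ccontr)
    define s where "s = norm (y - p)"
    assume "\<not> norm (y - p) < \<epsilon>"
    then have "\<epsilon> \<le> s" by (simp add: s_def)
    with \<epsilon> have s: "\<epsilon> \<le> s" "0 < s" by simp_all
    obtain a where a: "f p = ereal a"
      using Gamma0_ereal_real[OF f proximal_point_finite[OF f p]] by blast
    have "f p + ereal (c * (norm (y - p))\<^sup>2) \<le> f y + ereal (c * (norm (y - y))\<^sup>2)"
      using p unfolding proximal_point_def by (rule spec)
    then have "a + c * s\<^sup>2 \<le> r" using a r by (simp add: s_def)
    moreover have "- A - B * s \<le> a" using AB[of p] a by (simp add: s_def norm_minus_commute)
    moreover have "K \<le> K / \<epsilon> * s"
      using s \<epsilon> mult_right_mono[of \<epsilon> s K] by (simp add: K_def field_simps mult.commute)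
    moreover have "A + r \<le> K" by (simp add: K_def)
    ultimately have "c * s\<^sup>2 \<le> K / \<epsilon> * s + B * s" by linarith
    then have "c * s * s \<le> (K / \<epsilon> + B) * s" by (simp add: power2_eq_square distrib_right)
    then have "c * s \<le> K / \<epsilon> + B"
      using s by (simp add: mult_right_le_imp_le)
    moreover have "c * \<epsilon> \<le> c * s" using s \<open>0 < c\<close> by simp
    ultimately have "c * \<epsilon> \<le> K / \<epsilon> + B" by linarith
    moreover have "c * \<epsilon> = K / \<epsilon> + B + 1" using \<epsilon> by (simp add: c_def)
    ultimately show False by simp
  qed
  ultimately show ?thesis using that by blast
qed

lemma prox_proximal_point_shift:
  fixes f :: "'a::{real_inner,complete_space} \<Rightarrow> ereal"
  assumes f: "f \<in> Gamma0" and p: "proximal_point f c y p"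
  shows "prox f (p + (2 * c) *\<^sub>R (y - p)) = p"
proof (rule prox_eq_if_subgradient[OF f])
  fix z
  show "f p + ereal ((p + (2 * c) *\<^sub>R (y - p) - p) \<bullet> (z - p)) \<le> f z"
    using proximal_point_subgradient[OF f p, of z] by (simp add: mult.assoc)
qed

lemma prox_near_le:
  fixes f :: "'a::{real_inner,complete_space} \<Rightarrow> ereal"
  assumes f: "f \<in> Gamma0" and y: "f y \<noteq> \<infinity>" and "0 < \<epsilon>"
  obtains x where "dist (prox f x) y < \<epsilon>" "f (prox f x) \<le> f y"
proof -
  obtain c where c: "0 < c" and near: "\<And>p. proximal_point f c y p \<Longrightarrow> norm (y - p) < \<epsilon>"
    using proximal_point_near[OF assms] by blast
  obtain p where p: "proximal_point f c y p"
    using proximal_point_exists[OF f c, where y = y] by blast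
  have "f p \<le> f p + ereal (c * (norm (y - p))\<^sup>2)"
    using c by (simp add: add_increasing2)
  also have "\<dots> \<le> f y + ereal (c * (norm (y - y))\<^sup>2)"
    using p unfolding proximal_point_def by blast
  also have "\<dots> = f y" by (simp add: zero_ereal_def[symmetric])
  finally have "f p \<le> f y" .
  moreover have "dist p y < \<epsilon>" using near[OF p] by (simp add: dist_norm norm_minus_commute)
  ultimately show ?thesis
    using that[of "p + (2 * c) *\<^sub>R (y - p)"] prox_proximal_point_shift[OF f p] by simp
qed

lemma Gamma0_le_if_eq_on_prox_range:
  fixes f g :: "'a::{real_inner,complete_space} \<Rightarrow> ereal"
  assumes f: "f \<in> Gamma0" and g: "g \<in> Gamma0"
    and eq: "\<And>x. g (prox f x) = f (prox f x) + ereal \<kappa>" and y: "f y \<noteq> \<infinity>"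
  shows "g y \<le> f y + ereal \<kappa>"
proof (rule ccontr)
  assume "\<not> g y \<le> f y + ereal \<kappa>"
  then obtain d where "0 < d" and d: "\<And>q. dist q y < d \<Longrightarrow> f y + ereal \<kappa> < g q"
    using lsc_fun_gt_near[OF Gamma0D(4)[OF g]] by (metis not_le)
  obtain x where near: "dist (prox f x) y < d" and le: "f (prox f x) \<le> f y"
    using prox_near_le[OF f y \<open>0 < d\<close>] by blast
  from near have "f y + ereal \<kappa> < g (prox f x)" by (rule d)
  then have "f y + ereal \<kappa> < f (prox f x) + ereal \<kappa>" by (simp only: eq)
  moreover have "f (prox f x) + ereal \<kappa> \<le> f y + ereal \<kappa>" using le by (rule add_right_mono)
  ultimately show False by simp
qed

lemma Gamma0_eq_shift_if_eq_on_prox_range: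
  fixes f g :: "'a::{real_inner,complete_space} \<Rightarrow> ereal"
  assumes f: "f \<in> Gamma0" and g: "g \<in> Gamma0"
    and same: "\<And>x. prox f x = prox g x"
    and eq: "\<And>x. g (prox f x) = f (prox f x) + ereal \<kappa>"
  shows "g y = f y + ereal \<kappa>"
proof -
  have eq': "f (prox g x) = g (prox g x) + ereal (- \<kappa>)" for x
  proof -
    obtain a where "f (prox f x) = ereal a" using Gamma0_ereal_real[OF f prox_finite[OF f]] by blast
    then show ?thesis using eq[of x] same[of x] by simp
  qed
  show ?thesis
  proof (cases "f y = \<infinity>")
    case True
    have "g y = \<infinity>"
    proof (rule ccontr)
      assume "g y \<noteq> \<infinity>"
      then have "f y \<le> g y + ereal (- \<kappa>)" by (rule Gamma0_le_if_eq_on_prox_range[OF g f eq'])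
      with True \<open>g y \<noteq> \<infinity>\<close> show False by (cases "g y") auto
    qed
    with True show ?thesis by simp
  next
    case False
    then have le: "g y \<le> f y + ereal \<kappa>" by (rule Gamma0_le_if_eq_on_prox_range[OF f g eq])
    with False have "g y \<noteq> \<infinity>" by auto
    then have "f y \<le> g y + ereal (- \<kappa>)" by (rule Gamma0_le_if_eq_on_prox_range[OF g f eq'])
    with le False \<open>g y \<noteq> \<infinity>\<close> Gamma0D(1)[OF f, of y] Gamma0D(1)[OF g, of y] show ?thesis
      by (cases "f y"; cases "g y") auto
  qed
qed

theorem proposition5:
  fixes f g :: "'a::{real_inner, complete_space} \<Rightarrow> ereal" and x0 :: 'a
  assumes "f \<in> Gamma0" and "g \<in> Gamma0"
    and "x0 \<in> edom f \<inter> edom g"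
    and "\<And>x. norm (prox f x - x0) = norm (prox g x - x0)"
  shows "\<forall>x. f x - f x0 = g x - g x0"
proof
  fix y
  note f = assms(1) and g = assms(2)
  have fin: "f x0 \<noteq> \<infinity>" "g x0 \<noteq> \<infinity>" using assms(3) by (auto simp: edom_def)
  let ?hf = "prox_potential f x0" and ?hg = "prox_potential g x0"
  define \<kappa> where "\<kappa> = (INF z. ?hf z) - (INF z. ?hg z)"
  have bdd: "bdd_below (range ?hf)" "bdd_below (range ?hg)"
    using bdd_below_prox_potential[OF f fin(1)] bdd_below_prox_potential[OF g fin(2)] .
  have sub: "subgradient_selection ?hf (\<lambda>x. prox f x - x0)"
      "subgradient_selection ?hg (\<lambda>x. prox g x - x0)"
    by (simp_all add: prox_potential_subgradient f g)
  have firm: "firmly_nonexpansive (\<lambda>x. prox f x - x0)"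
      "firmly_nonexpansive (\<lambda>x. prox g x - x0)"
    by (simp_all add: firmly_nonexpansive_diff_const firmly_nonexpansive_prox f g)
  have diff: "?hf x - ?hg x = \<kappa>" for x
    using diff_Inf_eq_if_gradient_norms_eq[OF sub firm assms(4) bdd, of x] by (simp add: \<kappa>_def)
  have same: "prox f x = prox g x" for x
    using gradients_eq_if_diff_const[OF sub firmly_nonexpansive_imp_lipschitz[OF firm(2)] diff]
      by simp
  have "g (prox f x) = f (prox f x) + ereal \<kappa>" for x
    using prox_potential_diff_eq[OF f g same[of x], where a = x0] diff[of x] by simp
  then have shift: "g z = f z + ereal \<kappa>" for z
    by (rule Gamma0_eq_shift_if_eq_on_prox_range[OF f g same])
  show "f y - f x0 = g y - g x0"
    using shift[of y] shift[of x0] fin Gamma0D(1)[OF f, of y] Gamma0D(1)[OF f, of x0]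
    by (cases "f y"; cases "f x0") auto
qed

end
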